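(* Let $(X_n)_{n\ge0}$ be an ergodic discrete-time Markov chain on a finite state space $\mathcal S$ with transition probabilities $p_{xy}$ and stationary distribution $\pi$, and let $0\in\mathcal S$ be one of its states. Suppose there is a non-negative function $f:\mathcal S\to\mathbb R$ and constants $\varepsilon>0$, $c_0>0$, $C>0$ such that \[ f(0)=0,\qquad \max_{x\in\mathcal S:\ p_{0x}>0}f(x)=c_0,\qquad |f(X_{n+1})-f(X_n)|\le C, \] \[ \mathbb E\big(f(X_{n+1})-f(X_n)\mid X_n=x\big)<-\varepsilon\quad\text{for all }x\ne0. \] Then there are $c_1,c_2>0$ depending only on $c_0,C,\varepsilon$ such that for all $k>0$, \[ \pi(A_k)\le c_1e^{-c_2k},\qquad\text{where }A_k=\{x\in\mathcal S: f(x)>k\}. \] *)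

theory Defs
  imports Complex_Main
begin

definition stochastic :: "nat set \<Rightarrow> (nat \<Rightarrow> nat \<Rightarrow> real) \<Rightarrow> bool" where
  "stochastic S P \<longleftrightarrow> finite S \<and> S \<noteq> {} \<and>
     (\<forall>x\<in>S. \<forall>y\<in>S. P x y \<ge> 0) \<and> (\<forall>x\<in>S. (\<Sum>y\<in>S. P x y) = 1)"

fun mpow :: "nat set \<Rightarrow> (nat \<Rightarrow> nat \<Rightarrow> real) \<Rightarrow> nat \<Rightarrow> nat \<Rightarrow> nat \<Rightarrow> real" where
  "mpow S P 0 x y = (if x = y then 1 else 0)"
| "mpow S P (Suc n) x y = (\<Sum>z\<in>S. mpow S P n x z * P z y)"

definition irreducible_chain :: "nat set \<Rightarrow> (nat \<Rightarrow> nat \<Rightarrow> real) \<Rightarrow> bool" where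
  "irreducible_chain S P \<longleftrightarrow> (\<forall>x\<in>S. \<forall>y\<in>S. \<exists>n. mpow S P n x y > 0)"

definition period :: "nat set \<Rightarrow> (nat \<Rightarrow> nat \<Rightarrow> real) \<Rightarrow> nat \<Rightarrow> nat" where
  "period S P x = Gcd {n. n \<ge> 1 \<and> mpow S P n x x > 0}"

definition aperiodic_chain :: "nat set \<Rightarrow> (nat \<Rightarrow> nat \<Rightarrow> real) \<Rightarrow> bool" where
  "aperiodic_chain S P \<longleftrightarrow> (\<forall>x\<in>S. period S P x = 1)"

definition ergodic_chain :: "nat set \<Rightarrow> (nat \<Rightarrow> nat \<Rightarrow> real) \<Rightarrow> bool" where
  "ergodic_chain S P \<longleftrightarrow> stochastic S P \<and> irreducible_chain S P \<and> aperiodic_chain S P"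

definition stationary_dist :: "nat set \<Rightarrow> (nat \<Rightarrow> nat \<Rightarrow> real) \<Rightarrow> (nat \<Rightarrow> real) \<Rightarrow> bool" where
  "stationary_dist S P \<pi> \<longleftrightarrow> (\<forall>x\<in>S. \<pi> x \<ge> 0) \<and> (\<Sum>x\<in>S. \<pi> x) = 1 \<and>
     (\<forall>y\<in>S. \<pi> y = (\<Sum>x\<in>S. \<pi> x * P x y))"

end

theory Submission
  imports Defs
begin

text \<open>For small \<open>\<lambda> > 0\<close> take the Lyapunov function \<open>V = exp (\<lambda> f)\<close>. Because the jumps of \<open>f\<close>
  are bounded by \<open>C\<close>, a second order expansion of \<open>exp\<close> turns the drift \<open>-\<epsilon>\<close> of \<open>f\<close> into the
  contraction \<open>P V \<le> (1 - \<lambda> \<epsilon> / 2) V\<close> off the state \<open>0\<close>, while \<open>P V (0) \<le> exp (\<lambda> c0)\<close>.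
  Integrating against the stationary distribution, which satisfies \<open>\<pi> V = \<pi> (P V)\<close>, gives
  \<open>\<pi> V \<le> 2 exp (\<lambda> c0) / (\<lambda> \<epsilon>)\<close>, and Markov's inequality for \<open>V\<close> yields
  \<open>\<pi> {f > k} \<le> \<pi> V \<cdot> exp (- \<lambda> k)\<close>.\<close>

lemma exp_upper_quadratic:
  fixes t :: real
  assumes "t \<le> 1"
  shows "exp t \<le> 1 + t + t\<^sup>2"
proof (cases "t \<ge> 0")
  case True
  then show ?thesis using exp_bound[of t] assms by auto
next
  case False
  define s where "s = - t"
  have "s \<ge> 0" using False by (simp add: s_def)
  have "exp (- s) \<le> 1 / (1 + s)"
    using exp_ge_add_one_self[of s] \<open>s \<ge> 0\<close> by (simp add: exp_minus field_simps)
  also have "\<dots> \<le> 1 - s + s\<^sup>2"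
    using \<open>s \<ge> 0\<close> by (simp add: field_simps power2_eq_square)
  finally show ?thesis by (simp add: s_def)
qed

lemma exp_moment_le_of_bounded_increments:
  fixes w d :: "'a \<Rightarrow> real" and l C :: real
  assumes w_nonneg: "\<And>y. y \<in> S \<Longrightarrow> w y \<ge> 0" and w_sum: "(\<Sum>y\<in>S. w y) = 1"
    and bounded: "\<And>y. y \<in> S \<Longrightarrow> w y > 0 \<Longrightarrow> \<bar>d y\<bar> \<le> C"
    and "l \<ge> 0" and "l * C \<le> 1"
  shows "(\<Sum>y\<in>S. w y * exp (l * d y)) \<le> 1 + l * (\<Sum>y\<in>S. w y * d y) + l\<^sup>2 * C\<^sup>2"
proof -
  have "w y * exp (l * d y) \<le> w y * (1 + l * d y + l\<^sup>2 * C\<^sup>2)" if "y \<in> S" for y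
  proof (cases "w y > 0")
    case True
    have "\<bar>l * d y\<bar> \<le> l * C"
      using bounded[OF \<open>y \<in> S\<close> True] \<open>l \<ge> 0\<close> by (simp add: abs_mult mult_left_mono)
    then have "l * d y \<le> 1" and "(l * d y)\<^sup>2 \<le> (l * C)\<^sup>2"
      using \<open>l * C \<le> 1\<close> power_mono[OF \<open>\<bar>l * d y\<bar> \<le> l * C\<close> abs_ge_zero, of 2]
      by (auto simp: abs_le_iff)
    then have "exp (l * d y) \<le> 1 + l * d y + l\<^sup>2 * C\<^sup>2"
      using exp_upper_quadratic[of "l * d y"] by (simp add: power_mult_distrib)
    then show ?thesis using True by simp
  next
    case False
    then show ?thesis using w_nonneg[OF \<open>y \<in> S\<close>] by simp
  qed
  then have "(\<Sum>y\<in>S. w y * exp (l * d y)) \<le> (\<Sum>y\<in>S. w y * (1 + l\<^sup>2 * C\<^sup>2) + l * (w y * d y))"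
    by (intro sum_mono) (simp add: algebra_simps)
  also have "\<dots> = 1 + l * (\<Sum>y\<in>S. w y * d y) + l\<^sup>2 * C\<^sup>2"
    using w_sum by (simp add: sum.distrib sum_distrib_left flip: sum_distrib_right)
  finally show ?thesis .
qed

lemma stationary_dist_sum_invariant:
  assumes "stationary_dist S P \<pi>"
  shows "(\<Sum>x\<in>S. \<pi> x * V x) = (\<Sum>x\<in>S. \<pi> x * (\<Sum>y\<in>S. P x y * V y))"
proof -
  have "(\<Sum>x\<in>S. \<pi> x * V x) = (\<Sum>y\<in>S. (\<Sum>x\<in>S. \<pi> x * P x y) * V y)"
    using assms by (intro sum.cong) (auto simp: stationary_dist_def)
  also have "\<dots> = (\<Sum>x\<in>S. \<pi> x * (\<Sum>y\<in>S. P x y * V y))"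
    unfolding sum_distrib_left sum_distrib_right by (subst sum.swap) (simp add: mult.assoc)
  finally show ?thesis .
qed

lemma stationary_dist_drift_bound:
  assumes "stationary_dist S P \<pi>"
    and drift: "\<And>x. x \<in> S \<Longrightarrow> (\<Sum>y\<in>S. P x y * V y) \<le> \<rho> * V x + b x"
  shows "(1 - \<rho>) * (\<Sum>x\<in>S. \<pi> x * V x) \<le> (\<Sum>x\<in>S. \<pi> x * b x)"
proof -
  have "(\<Sum>x\<in>S. \<pi> x * V x) = (\<Sum>x\<in>S. \<pi> x * (\<Sum>y\<in>S. P x y * V y))"
    using assms(1) by (rule stationary_dist_sum_invariant)
  also have "\<dots> \<le> (\<Sum>x\<in>S. \<pi> x * (\<rho> * V x + b x))"
    using assms(1) drift by (intro sum_mono mult_left_mono) (auto simp: stationary_dist_def)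
  also have "\<dots> = \<rho> * (\<Sum>x\<in>S. \<pi> x * V x) + (\<Sum>x\<in>S. \<pi> x * b x)"
    by (simp add: algebra_simps sum.distrib sum_distrib_left)
  finally show ?thesis by (simp add: algebra_simps)
qed

lemma sum_superlevel_le_exp_moment:
  fixes f \<pi> :: "'a \<Rightarrow> real" and l k :: real
  assumes "finite S" and "\<And>x. x \<in> S \<Longrightarrow> \<pi> x \<ge> 0" and "l \<ge> 0"
  shows "(\<Sum>x\<in>{x\<in>S. f x > k}. \<pi> x) \<le> exp (- l * k) * (\<Sum>x\<in>S. \<pi> x * exp (l * f x))"
proof -
  have "\<pi> x \<le> exp (- l * k) * (\<pi> x * exp (l * f x))" if "x \<in> S" "f x > k" for x
  proof -
    have "1 \<le> exp (l * (f x - k))" using that \<open>l \<ge> 0\<close> by simp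
    then have "\<pi> x * 1 \<le> \<pi> x * exp (l * (f x - k))"
      using assms(2)[OF \<open>x \<in> S\<close>] by (rule mult_left_mono)
    then show ?thesis by (simp add: algebra_simps flip: exp_add)
  qed
  then have "(\<Sum>x\<in>{x\<in>S. f x > k}. \<pi> x) \<le> (\<Sum>x\<in>{x\<in>S. f x > k}. exp (- l * k) * (\<pi> x * exp (l * f x)))"
    by (intro sum_mono) auto
  also have "\<dots> \<le> (\<Sum>x\<in>S. exp (- l * k) * (\<pi> x * exp (l * f x)))"
    using assms by (intro sum_mono2) auto
  finally show ?thesis by (simp add: sum_distrib_left)
qed

lemma stationary_dist_exp_moment_bound:
  fixes f :: "nat \<Rightarrow> real" and l \<epsilon> c0 C :: real
  assumes "stochastic S P" and "stationary_dist S P \<pi>" and "z0 \<in> S"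
    and start: "\<And>y. y \<in> S \<Longrightarrow> P z0 y > 0 \<Longrightarrow> f y \<le> c0"
    and jump: "\<And>x y. x \<in> S \<Longrightarrow> y \<in> S \<Longrightarrow> P x y > 0 \<Longrightarrow> \<bar>f y - f x\<bar> \<le> C"
    and drift: "\<And>x. x \<in> S \<Longrightarrow> x \<noteq> z0 \<Longrightarrow> (\<Sum>y\<in>S. P x y * (f y - f x)) < - \<epsilon>"
    and "l > 0" and "l * C \<le> 1" and "l * C\<^sup>2 \<le> \<epsilon> / 2" and "l * \<epsilon> \<le> 2"
  shows "l * \<epsilon> / 2 * (\<Sum>x\<in>S. \<pi> x * exp (l * f x)) \<le> exp (l * c0)"
proof -
  define \<rho> where "\<rho> = 1 - l * \<epsilon> / 2"
  define V where "V x = exp (l * f x)" for x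
  have P_nonneg: "\<And>x y. x \<in> S \<Longrightarrow> y \<in> S \<Longrightarrow> P x y \<ge> 0"
    and P_row: "\<And>x. x \<in> S \<Longrightarrow> (\<Sum>y\<in>S. P x y) = 1"
    using \<open>stochastic S P\<close> by (auto simp: stochastic_def)
  have \<pi>_nonneg: "\<And>x. x \<in> S \<Longrightarrow> \<pi> x \<ge> 0" and \<pi>_sum: "(\<Sum>x\<in>S. \<pi> x) = 1"
    using \<open>stationary_dist S P \<pi>\<close> by (auto simp: stationary_dist_def)
  have "(\<Sum>y\<in>S. P x y * V y) \<le> \<rho> * V x + (if x = z0 then exp (l * c0) else 0)"
    if "x \<in> S" for x
  proof (cases "x = z0")
    case True
    have "P x y * V y \<le> P x y * exp (l * c0)" if "y \<in> S" for y
      using start[OF \<open>y \<in> S\<close>] P_nonneg[OF \<open>x \<in> S\<close> \<open>y \<in> S\<close>] \<open>l > 0\<close> True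
      by (cases "P x y > 0") (auto simp: V_def intro: mult_left_mono)
    then have "(\<Sum>y\<in>S. P x y * V y) \<le> (\<Sum>y\<in>S. P x y * exp (l * c0))"
      by (rule sum_mono)
    also have "\<dots> = exp (l * c0)"
      using P_row[OF \<open>x \<in> S\<close>] by (simp flip: sum_distrib_right)
    finally have "(\<Sum>y\<in>S. P x y * V y) \<le> exp (l * c0)" .
    moreover have "\<rho> * V x \<ge> 0" using \<open>l * \<epsilon> \<le> 2\<close> by (simp add: \<rho>_def V_def)
    ultimately show ?thesis using True by simp
  next
    case False
    have "(\<Sum>y\<in>S. P x y * exp (l * (f y - f x)))
        \<le> 1 + l * (\<Sum>y\<in>S. P x y * (f y - f x)) + l\<^sup>2 * C\<^sup>2"
      using P_nonneg P_row jump \<open>x \<in> S\<close> \<open>l > 0\<close> \<open>l * C \<le> 1\<close>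
      by (intro exp_moment_le_of_bounded_increments) auto
    also have "\<dots> \<le> 1 - l * \<epsilon> + l * (\<epsilon> / 2)"
    proof -
      have "l * (\<Sum>y\<in>S. P x y * (f y - f x)) \<le> l * - \<epsilon>"
        using drift[OF \<open>x \<in> S\<close> False] \<open>l > 0\<close> by (intro mult_left_mono) auto
      moreover have "l\<^sup>2 * C\<^sup>2 \<le> l * (\<epsilon> / 2)"
        using \<open>l * C\<^sup>2 \<le> \<epsilon> / 2\<close> \<open>l > 0\<close> mult_left_mono[of "l * C\<^sup>2" "\<epsilon> / 2" l]
        by (simp add: power2_eq_square mult.assoc)
      ultimately show ?thesis by linarith
    qed
    finally have "(\<Sum>y\<in>S. P x y * exp (l * (f y - f x))) \<le> \<rho>"
      by (simp add: \<rho>_def mult.commute)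
    moreover have "(\<Sum>y\<in>S. P x y * V y) = V x * (\<Sum>y\<in>S. P x y * exp (l * (f y - f x)))"
      by (simp add: V_def sum_distrib_left algebra_simps flip: exp_add)
    ultimately show ?thesis
      using False by (simp add: V_def mult.commute)
  qed
  then have "(1 - \<rho>) * (\<Sum>x\<in>S. \<pi> x * V x)
      \<le> (\<Sum>x\<in>S. \<pi> x * (if x = z0 then exp (l * c0) else 0))"
    by (rule stationary_dist_drift_bound[OF \<open>stationary_dist S P \<pi>\<close>])
  also have "\<dots> = \<pi> z0 * exp (l * c0)"
    using \<open>stochastic S P\<close> \<open>z0 \<in> S\<close> by (simp add: stochastic_def if_distrib sum.delta cong: if_cong)
  also have "\<dots> \<le> exp (l * c0)"
  proof -
    have "\<pi> z0 \<le> (\<Sum>x\<in>S. \<pi> x)"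
      using \<open>stochastic S P\<close> \<pi>_nonneg \<open>z0 \<in> S\<close>
      by (intro member_le_sum) (auto simp: stochastic_def)
    then show ?thesis using \<pi>_sum by (simp add: mult_left_le_one_le)
  qed
  finally show ?thesis by (simp add: \<rho>_def V_def)
qed

theorem lemma2:
  fixes c0 C \<epsilon> :: real
  assumes "\<epsilon> > 0" and "c0 > 0" and "C > 0"
  shows "\<exists>c1 c2 :: real. c1 > 0 \<and> c2 > 0 \<and>
    (\<forall>(S :: nat set) (P :: nat \<Rightarrow> nat \<Rightarrow> real) (\<pi> :: nat \<Rightarrow> real) (f :: nat \<Rightarrow> real) (z0 :: nat).
       ergodic_chain S P \<longrightarrow> stationary_dist S P \<pi> \<longrightarrow> z0 \<in> S \<longrightarrow>
       (\<forall>x\<in>S. f x \<ge> 0) \<longrightarrow> f z0 = 0 \<longrightarrow>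
       Max {f x | x. x \<in> S \<and> P z0 x > 0} = c0 \<longrightarrow>
       (\<forall>x\<in>S. \<forall>y\<in>S. P x y > 0 \<longrightarrow> \<bar>f y - f x\<bar> \<le> C) \<longrightarrow>
       (\<forall>x\<in>S. x \<noteq> z0 \<longrightarrow> (\<Sum>y\<in>S. P x y * (f y - f x)) < - \<epsilon>) \<longrightarrow>
       (\<forall>k::real. k > 0 \<longrightarrow> (\<Sum>x\<in>{x\<in>S. f x > k}. \<pi> x) \<le> c1 * exp (- c2 * k)))"
proof -
  define l where "l = min (min (1 / C) (\<epsilon> / (2 * C\<^sup>2))) (2 / \<epsilon>)"
  have "l \<le> 1 / C" and "l \<le> \<epsilon> / (2 * C\<^sup>2)" and "l \<le> 2 / \<epsilon>"
    by (simp_all add: l_def)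
  then have l_bounds: "l * C \<le> 1" "l * C\<^sup>2 \<le> \<epsilon> / 2" "l * \<epsilon> \<le> 2"
    using assms by (simp_all add: pos_le_divide_eq field_simps)
  have "l > 0" using assms by (simp add: l_def)
  define c1 where "c1 = exp (l * c0) / (l * \<epsilon> / 2)"
  show ?thesis
  proof (rule exI[of _ c1], rule exI[of _ l], intro conjI allI impI)
    show "c1 > 0" "l > 0" using \<open>l > 0\<close> \<open>\<epsilon> > 0\<close> by (simp_all add: c1_def)
    fix S P \<pi> f z0 and k :: real
    assume "ergodic_chain S P" and stat: "stationary_dist S P \<pi>" and "z0 \<in> S"
      and "\<forall>x\<in>S. f x \<ge> 0" "f z0 = 0"
      and max: "Max {f x | x. x \<in> S \<and> P z0 x > 0} = c0"
      and jump: "\<forall>x\<in>S. \<forall>y\<in>S. P x y > 0 \<longrightarrow> \<bar>f y - f x\<bar> \<le> C"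
      and drift: "\<forall>x\<in>S. x \<noteq> z0 \<longrightarrow> (\<Sum>y\<in>S. P x y * (f y - f x)) < - \<epsilon>"
      and "k > 0"
    then have "stochastic S P" and "finite S" by (auto simp: ergodic_chain_def stochastic_def)
    have "f y \<le> c0" if "y \<in> S" "P z0 y > 0" for y
      using max Max_ge[of "{f x | x. x \<in> S \<and> P z0 x > 0}"] \<open>finite S\<close> that by auto
    then have "l * \<epsilon> / 2 * (\<Sum>x\<in>S. \<pi> x * exp (l * f x)) \<le> exp (l * c0)"
      using \<open>stochastic S P\<close> stat \<open>z0 \<in> S\<close> jump drift \<open>l > 0\<close> l_bounds
      by (intro stationary_dist_exp_moment_bound) auto
    then have "(\<Sum>x\<in>S. \<pi> x * exp (l * f x)) \<le> c1"
      using \<open>l > 0\<close> \<open>\<epsilon> > 0\<close> by (simp add: c1_def pos_le_divide_eq mult.commute)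
    moreover have "(\<Sum>x\<in>{x\<in>S. f x > k}. \<pi> x) \<le> exp (- l * k) * (\<Sum>x\<in>S. \<pi> x * exp (l * f x))"
      using \<open>finite S\<close> stat \<open>l > 0\<close>
      by (intro sum_superlevel_le_exp_moment) (auto simp: stationary_dist_def)
    ultimately show "(\<Sum>x\<in>{x\<in>S. f x > k}. \<pi> x) \<le> c1 * exp (- l * k)"
      by (simp add: mult.commute mult_left_mono order_trans)
  qed
qed

end
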